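(* Consider the two-armed Gaussian bandit with two candidate models described in the context, under disagreement $\phi(\nu)=1$, $\phi(\gamma)=2$, with $\Delta_1<0<\Delta_2$, and let $\mu$ be the unique invariant probability measure on $(0,1)$ of the posterior process $\{\pi_t\}$. Then for every $\varepsilon\in(0,1/2)$, $\mu([\varepsilon,1-\varepsilon])>0$. In particular, in the stationary regime both actions are chosen with strictly positive long-run frequency, i.e. $\int\pi\,\mu(d\pi)\in(0,1)$.
   Context: Actions are $\mathcal A=\{1,2\}$. True environment: conditional on the past and on $A_t=i$, $R_t\sim\mathcal N(g(i),1)$. Two candidate models $\nu=(\nu_1,\nu_2)$, $\gamma=(\gamma_1,\gamma_2)\in\mathbb R^2$; under model $\theta$ the agent believes $R_t\mid A_t=i\sim\mathcal N(\theta_i,1)$ with density $f_\theta(r\mid i)$; $\phi(\theta)=\arg\max_i\theta_i$ (assumed unique). Thompson Sampling: prior $\pi_0\in(0,1)$ on $\nu$; at each date draw $\theta_t=\nu$ w.p. $\pi_t$, else $\gamma$; play $A_t=\phi(\theta_t)$ (so action 1 is played with probability $\pi_t$); observe $R_t$; Bayes update $\pi_{t+1}=\pi_t f_\nu(R_t\mid A_t)/(\pi_t f_\nu(R_t\mid A_t)+(1-\pi_t)f_\gamma(R_t\mid A_t))$. $\Delta_i:=\mathbb E_{R\sim\mathcal N(g(i),1)}[\log f_\nu(R\mid i)-\log f_\gamma(R\mid i)]$. In this regime the posterior process is a positive Harris recurrent Markov chain on $(0,1)$ with a unique invariant probability measure $\mu$. *)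

theory Defs
  imports "HOL-Probability.Probability"
begin

text \<open>Models are functions from actions (1 and 2) to mean rewards.\<close>

definition fdens :: "(nat \<Rightarrow> real) \<Rightarrow> nat \<Rightarrow> real \<Rightarrow> real" where
  "fdens \<theta> i r = normal_density (\<theta> i) 1 r"

definition reward_dist :: "(nat \<Rightarrow> real) \<Rightarrow> nat \<Rightarrow> real measure" where
  "reward_dist g i = density lborel (normal_density (g i) 1)"

text \<open>Greedy action of a model (argmax over {1,2}; assumed unique).\<close>
definition phi :: "(nat \<Rightarrow> real) \<Rightarrow> nat" where
  "phi \<theta> = (if \<theta> 2 < \<theta> 1 then 1 else 2)"

definition post_update :: "(nat \<Rightarrow> real) \<Rightarrow> (nat \<Rightarrow> real) \<Rightarrow> nat \<Rightarrow> real \<Rightarrow> real \<Rightarrow> real" where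
  "post_update \<nu> \<gamma> i p r =
     p * fdens \<nu> i r / (p * fdens \<nu> i r + (1 - p) * fdens \<gamma> i r)"

definition KL_diff :: "(nat \<Rightarrow> real) \<Rightarrow> (nat \<Rightarrow> real) \<Rightarrow> (nat \<Rightarrow> real) \<Rightarrow> nat \<Rightarrow> real" where
  "KL_diff g \<nu> \<gamma> i =
     (\<integral> r. ln (fdens \<nu> i r) - ln (fdens \<gamma> i r) \<partial>reward_dist g i)"

text \<open>Transition probability of the Thompson sampling posterior chain:
  from p, with probability p sample nu and play phi nu, otherwise play phi gamma.\<close>
definition TS_kernel :: "(nat \<Rightarrow> real) \<Rightarrow> (nat \<Rightarrow> real) \<Rightarrow> (nat \<Rightarrow> real) \<Rightarrow> real \<Rightarrow> real set \<Rightarrow> ennreal" where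
  "TS_kernel g \<nu> \<gamma> p A =
     ennreal p * emeasure (reward_dist g (phi \<nu>)) {r. post_update \<nu> \<gamma> (phi \<nu>) p r \<in> A}
   + ennreal (1 - p) * emeasure (reward_dist g (phi \<gamma>)) {r. post_update \<nu> \<gamma> (phi \<gamma>) p r \<in> A}"

definition TS_invariant :: "(nat \<Rightarrow> real) \<Rightarrow> (nat \<Rightarrow> real) \<Rightarrow> (nat \<Rightarrow> real) \<Rightarrow> real measure \<Rightarrow> bool" where
  "TS_invariant g \<nu> \<gamma> \<mu> \<longleftrightarrow>
     sets \<mu> = sets borel \<and> prob_space \<mu> \<and> emeasure \<mu> {0<..<1} = 1 \<and>
     (\<forall>A \<in> sets borel. emeasure \<mu> A = (\<integral>\<^sup>+ p. TS_kernel g \<nu> \<gamma> p A \<partial>\<mu>))"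

end

theory Submission
  imports Defs
begin

(* From a prior weight p \<in> (0,1), one observation of the action i = \<phi>(\<nu>) moves the posterior to
  p / (p + (1 - p) exp((\<gamma>\<^sub>i - \<nu>\<^sub>i)(r - (\<nu>\<^sub>i + \<gamma>\<^sub>i)/2))), a continuous function of the reward r which
  passes through 1/2 as soon as the two models disagree on the mean of that action. Since a Gaussian
  charges every nonempty open set, every neighbourhood of 1/2 is hit with positive probability.
  Invariance bounds \<mu>(A) from below by \<integral> p \<cdot> P(posterior \<in> A) d\<mu>(p), and \<mu> lives on (0,1), so \<mu>
  charges every neighbourhood of 1/2; the mean of \<mu> lies in (0,1) because \<mu> does. *)

lemma emeasure_normal_density_open_pos:
  fixes U :: "real set"
  assumes "0 < \<sigma>" "open U" "U \<noteq> {}"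
  shows "0 < emeasure (density lborel (normal_density m \<sigma>)) U"
proof -
  obtain x d where "0 < d" "ball x d \<subseteq> U"
    using assms(2,3) open_contains_ball by blast
  then have "0 < emeasure lborel (ball x d)"
    by (simp add: ball_eq_greaterThanLessThan)
  also have "\<dots> \<le> emeasure lborel U"
    using \<open>ball x d \<subseteq> U\<close> assms(2) by (intro emeasure_mono) auto
  finally have "0 < emeasure lborel U" .
  then have "U \<notin> null_sets lborel"
    by auto
  have "U \<notin> null_sets (density lborel (normal_density m \<sigma>))"
  proof
    assume "U \<in> null_sets (density lborel (normal_density m \<sigma>))"
    then have "AE y in lborel. y \<in> U \<longrightarrow> ennreal (normal_density m \<sigma> y) = 0"
      by (subst (asm) null_sets_density_iff) auto
    moreover have "ennreal (normal_density m \<sigma> y) \<noteq> 0" for y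
      using normal_density_pos[OF assms(1), of m y] by simp
    ultimately have "AE y in lborel. y \<notin> U"
      by auto
    with \<open>U \<notin> null_sets lborel\<close> show False
      using assms(2) by (simp add: AE_iff_null_sets)
  qed
  then show ?thesis
    using assms(2) by (simp add: null_sets_def zero_less_iff_neq_zero)
qed

lemma (in prob_space) expectation_in_open_interval:
  fixes X :: "'a \<Rightarrow> real"
  assumes "X \<in> borel_measurable M" "AE x in M. a < X x \<and> X x < b"
  shows "a < expectation X \<and> expectation X < b"
proof -
  have "integrable M X"
  proof (rule integrable_const_bound)
    show "AE x in M. norm (X x) \<le> \<bar>a\<bar> + \<bar>b\<bar>"
      using assms(2) by eventually_elim auto
  qed (rule assms(1))
  then show ?thesis
    using assms(2) integral_less_AE_space[of "\<lambda>_. a" X] integral_less_AE_space[of X "\<lambda>_. b"]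
    by (auto simp: emeasure_space_1 prob_space)
qed

lemma fdens_pos: "0 < fdens \<theta> i r"
  unfolding fdens_def by (rule normal_density_pos) simp

lemma fdens_ratio:
  "fdens \<gamma> i r / fdens \<nu> i r = exp ((\<gamma> i - \<nu> i) * (r - (\<nu> i + \<gamma> i) / 2))"
proof -
  have "fdens \<gamma> i r / fdens \<nu> i r = exp (- ((r - \<gamma> i)\<^sup>2 / 2) - - ((r - \<nu> i)\<^sup>2 / 2))"
    unfolding fdens_def normal_density_def exp_diff by simp
  also have "- ((r - \<gamma> i)\<^sup>2 / 2) - - ((r - \<nu> i)\<^sup>2 / 2) = (\<gamma> i - \<nu> i) * (r - (\<nu> i + \<gamma> i) / 2)"
    by (simp add: power2_eq_square field_simps)
  finally show ?thesis .
qed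

lemma post_update_eq:
  "post_update \<nu> \<gamma> i p r = p / (p + (1 - p) * exp ((\<gamma> i - \<nu> i) * (r - (\<nu> i + \<gamma> i) / 2)))"
    (is "_ = p / (p + (1 - p) * ?E)")
proof -
  have f: "fdens \<nu> i r \<noteq> 0"
    using fdens_pos[of \<nu> i r] by simp
  have "fdens \<gamma> i r = fdens \<nu> i r * ?E"
    using fdens_ratio[of \<gamma> i r \<nu>] f by (simp add: field_simps)
  then have "post_update \<nu> \<gamma> i p r = (fdens \<nu> i r * p) / (fdens \<nu> i r * (p + (1 - p) * ?E))"
    unfolding post_update_def by (simp add: algebra_simps)
  then show ?thesis
    using f by simp
qed

lemma post_update_eq_half:
  assumes "\<nu> i \<noteq> \<gamma> i" "0 < p" "p < 1"
  obtains r where "post_update \<nu> \<gamma> i p r = 1/2"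
proof
  define r where "r = (\<nu> i + \<gamma> i) / 2 + ln (p / (1 - p)) / (\<gamma> i - \<nu> i)"
  have "exp ((\<gamma> i - \<nu> i) * (r - (\<nu> i + \<gamma> i) / 2)) = p / (1 - p)"
    using assms by (simp add: r_def)
  then show "post_update \<nu> \<gamma> i p r = 1/2"
    using assms by (simp add: post_update_eq)
qed

lemma continuous_post_update:
  assumes "0 \<le> p" "p \<le> 1"
  shows "continuous (at r) (post_update \<nu> \<gamma> i p)"
proof -
  have "0 < p + (1 - p) * exp ((\<gamma> i - \<nu> i) * (x - (\<nu> i + \<gamma> i) / 2))" for x
    using assms by (cases "p = 0") (auto intro: add_pos_nonneg)
  then show ?thesis
    unfolding post_update_eq[abs_def] by (intro continuous_intros) (auto simp: less_le)
qed

lemma measurable_post_update: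
  "(\<lambda>x. post_update \<nu> \<gamma> i (fst x) (snd x)) \<in> borel_measurable (borel \<Otimes>\<^sub>M borel)"
  unfolding post_update_def fdens_def normal_density_def by measurable

lemma measurable_emeasure_post_update_vimage:
  assumes "A \<in> sets borel"
  shows "(\<lambda>p. emeasure (reward_dist g i) {r. post_update \<nu> \<gamma> i p r \<in> A}) \<in> borel_measurable borel"
proof -
  interpret sigma_finite_measure "reward_dist g i"
    unfolding reward_dist_def by (intro prob_space_imp_sigma_finite prob_space_normal_density) simp
  have "sets (borel \<Otimes>\<^sub>M reward_dist g i) = sets (borel \<Otimes>\<^sub>M (borel :: real measure))"
    by (intro sets_pair_measure_cong) (simp_all add: reward_dist_def)
  moreover have "{x \<in> space (borel \<Otimes>\<^sub>M borel). post_update \<nu> \<gamma> i (fst x) (snd x) \<in> A}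
      \<in> sets (borel \<Otimes>\<^sub>M (borel :: real measure))"
    using measurable_post_update assms by measurable
  ultimately show ?thesis
    by (intro measurable_emeasure) (simp_all add: reward_dist_def space_pair_measure)
qed

lemma emeasure_post_update_vimage_pos:
  assumes "\<nu> i \<noteq> \<gamma> i" "0 < p" "p < 1" "A \<in> sets borel" "1/2 \<in> interior A"
  shows "0 < emeasure (reward_dist g i) {r. post_update \<nu> \<gamma> i p r \<in> A}"
proof -
  obtain r where r: "post_update \<nu> \<gamma> i p r = 1/2"
    using post_update_eq_half assms(1-3) .
  have cont: "continuous (at x) (post_update \<nu> \<gamma> i p)" for x
    using assms(2,3) by (intro continuous_post_update) auto
  have "open (post_update \<nu> \<gamma> i p -` interior A)"
    using cont by (intro continuous_open_vimage) auto
  moreover have "r \<in> post_update \<nu> \<gamma> i p -` interior A"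
    using assms(5) by (simp only: vimage_eq r)
  ultimately have "0 < emeasure (reward_dist g i) (post_update \<nu> \<gamma> i p -` interior A)"
    unfolding reward_dist_def by (intro emeasure_normal_density_open_pos) auto
  also have "\<dots> \<le> emeasure (reward_dist g i) {r. post_update \<nu> \<gamma> i p r \<in> A}"
  proof (rule emeasure_mono)
    have "post_update \<nu> \<gamma> i p \<in> borel_measurable borel"
      using cont by (intro borel_measurable_continuous_onI continuous_at_imp_continuous_on) auto
    then show "{r. post_update \<nu> \<gamma> i p r \<in> A} \<in> sets (reward_dist g i)"
      using assms(4) by (simp add: reward_dist_def measurable_sets_borel)
  qed (use interior_subset in auto)
  finally show ?thesis .
qed

lemma TS_invariant_AE_unit_interval:
  assumes "TS_invariant g \<nu> \<gamma> \<mu>"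
  shows "AE p in \<mu>. p \<in> {0<..<1}"
proof -
  interpret prob_space \<mu>
    using assms by (simp add: TS_invariant_def)
  show ?thesis
    using assms by (intro AE_prob_1) (simp add: TS_invariant_def emeasure_eq_measure)
qed

lemma TS_invariant_measure_pos:
  assumes inv: "TS_invariant g \<nu> \<gamma> \<mu>" and "\<nu> (phi \<nu>) \<noteq> \<gamma> (phi \<nu>)"
    and A: "A \<in> sets borel" and "1/2 \<in> interior A"
  shows "0 < measure \<mu> A"
proof -
  interpret prob_space \<mu>
    using inv by (simp add: TS_invariant_def)
  have sets: "sets \<mu> = sets borel"
    using inv by (simp add: TS_invariant_def)
  define G where "G p = ennreal p * emeasure (reward_dist g (phi \<nu>)) {r. post_update \<nu> \<gamma> (phi \<nu>) p r \<in> A}"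
    for p
  have G: "G \<in> borel_measurable \<mu>"
    unfolding G_def measurable_cong_sets[OF sets refl]
    using measurable_emeasure_post_update_vimage[OF A] by measurable
  have G_nonzero: "AE p in \<mu>. G p \<noteq> 0"
    using TS_invariant_AE_unit_interval[OF inv]
  proof eventually_elim
    case (elim p)
    then show ?case
      using emeasure_post_update_vimage_pos[of \<nu> "phi \<nu>" \<gamma> p A g] assms(2-4)
      by (auto simp: G_def)
  qed
  have "0 < (\<integral>\<^sup>+ p. G p \<partial>\<mu>)"
  proof (rule ccontr)
    assume "\<not> 0 < (\<integral>\<^sup>+ p. G p \<partial>\<mu>)"
    then have "AE p in \<mu>. G p = 0"
      using G by (simp add: zero_less_iff_neq_zero nn_integral_0_iff_AE)
    with G_nonzero have "AE p in \<mu>. False"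
      by eventually_elim simp
    then show False
      by simp
  qed
  also have "\<dots> \<le> (\<integral>\<^sup>+ p. TS_kernel g \<nu> \<gamma> p A \<partial>\<mu>)"
    by (intro nn_integral_mono) (simp add: G_def TS_kernel_def)
  also have "\<dots> = emeasure \<mu> A"
    using inv A by (simp add: TS_invariant_def)
  finally show ?thesis
    by (simp add: emeasure_eq_measure)
qed

lemma TS_invariant_mean_in_unit_interval:
  assumes inv: "TS_invariant g \<nu> \<gamma> \<mu>"
  shows "0 < (\<integral>p. p \<partial>\<mu>) \<and> (\<integral>p. p \<partial>\<mu>) < 1"
proof -
  interpret prob_space \<mu>
    using inv by (simp add: TS_invariant_def)
  have sets: "sets \<mu> = sets borel"
    using inv by (simp add: TS_invariant_def)
  have "(\<lambda>p. p) \<in> borel_measurable \<mu>"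
    unfolding measurable_cong_sets[OF sets refl] by simp
  then show ?thesis
    using TS_invariant_AE_unit_interval[OF inv] by (intro expectation_in_open_interval) auto
qed

lemma KL_diff_same_mean: "\<nu> i = \<gamma> i \<Longrightarrow> KL_diff g \<nu> \<gamma> i = 0"
  unfolding KL_diff_def fdens_def by simp

theorem corollary2:
  fixes g \<nu> \<gamma> :: "nat \<Rightarrow> real" and \<mu> :: "real measure"
  assumes "\<nu> 1 \<noteq> \<nu> 2" and "\<gamma> 1 \<noteq> \<gamma> 2"
    and "phi \<nu> = 1" and "phi \<gamma> = 2"
    and "KL_diff g \<nu> \<gamma> 1 < 0" and "0 < KL_diff g \<nu> \<gamma> 2"
    and "TS_invariant g \<nu> \<gamma> \<mu>"
    and "\<forall>\<mu>'. TS_invariant g \<nu> \<gamma> \<mu>' \<longrightarrow> \<mu>' = \<mu>"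
  shows "(\<forall>\<epsilon>::real. 0 < \<epsilon> \<and> \<epsilon> < 1/2 \<longrightarrow> measure \<mu> {\<epsilon>..1-\<epsilon>} > 0)
         \<and> 0 < (\<integral>p. p \<partial>\<mu>) \<and> (\<integral>p. p \<partial>\<mu>) < 1"
proof -
  have "\<nu> 1 \<noteq> \<gamma> 1"
    using KL_diff_same_mean[of \<nu> 1 \<gamma> g] assms(5) by force
  then have separated: "\<nu> (phi \<nu>) \<noteq> \<gamma> (phi \<nu>)"
    unfolding assms(3) .
  have "0 < measure \<mu> {\<epsilon>..1-\<epsilon>}" if "0 < \<epsilon>" "\<epsilon> < 1/2" for \<epsilon> :: real
    using that by (intro TS_invariant_measure_pos[OF assms(7) separated]) auto
  then show ?thesis
    using TS_invariant_mean_in_unit_interval[OF assms(7)] by blast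
qed

end
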